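(* Let $f_1 \in \mathcal{F}_{\mu_1,L_1}(\mathbb{R}^d)$ and $f_2 \in \mathcal{F}_{\mu_2,L_2}(\mathbb{R}^d)$ with $\mu_1 \in [0,\infty)$, $L_1 \in (\mu_1,\infty]$, $\mu_2 \in \mathbb{R}$, $L_2 \in (\mu_2,\infty]$, such that $F = f_1 - f_2$ is bounded below with $F_{lo} := \inf F$, $\emptyset \ne \operatorname{dom}\partial f_1 \subseteq \operatorname{dom}\partial f_2$ and $\operatorname{range}\partial f_2 \subseteq \operatorname{range}\partial f_1$. Assume $L_1 < \infty$ or $L_2 < \infty$, and $\mu_1+\mu_2>0$ or $\mu_1=\mu_2=0$. Run $N \ge 1$ DCA iterations from $x^0 \in \operatorname{dom}\partial f_1$: for $k = 0,\dots,N-1$ select $g_2^k \in \partial f_2(x^k)$ and $x^{k+1} \in \operatorname{argmin}_w \{f_1(w) - \langle g_2^k, w\rangle\}$, and set $g_1^{k+1} := g_2^k \in \partial f_1(x^{k+1})$; let $g_1^0 \in \partial f_1(x^0)$ and $g_2^N \in \partial f_2(x^N)$ be arbitrary. Suppose the parameters lie in the domain $D_i$ of one of the six regimes below and let $p_i := \sigma_i + \sigma_i^+$. Then $$\tfrac12 \min_{0\le k\le N} \|g_1^k - g_2^k\|^2 \le \frac{F(x^0) - F(x^N)}{p_i N}.$$ If in addition $L_1 > \mu_2$, then $$\tfrac12 \min_{0\le k\le N} \|g_1^k - g_2^k\|^2 \le \frac{F(x^0) - F_{lo}}{p_i N + \frac{1}{L_1 - \mu_2}}.$$ Regimes (with $B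 := \mu_1^{-1}+\mu_2^{-1}+L_2^{-1}$, $E := \frac{L_2+\mu_2}{L_1L_2}\cdot\frac{L_2-L_1}{-\mu_2} + \mu_1^{-1} - L_1^{-1}$): (1) $\sigma_1 = L_2^{-1}\frac{L_2-\mu_1}{L_1-\mu_1}$, $\sigma_1^+ = L_2^{-1}\big(1 + \frac{L_2^{-1}-L_1^{-1}}{\mu_1^{-1}-L_1^{-1}}\big)$; $D_1$: $L_1\ge L_2\ge\mu_1\ge0$, $L_1>\mu_2$, and $\mu_2 \ge 0$ or ($\mu_2<0$ and $E\le0$). (2) $\sigma_2 = L_1^{-1}\big(1+\frac{L_1^{-1}-L_2^{-1}}{\mu_2^{-1}-L_2^{-1}}\big)$, $\sigma_2^+ = L_1^{-1}\frac{L_1-\mu_2}{L_2-\mu_2}$; $D_2$: $L_2\ge L_1\ge\mu_2\ge0$, $L_2>\mu_1$, $\mu_1\ge0$. (3) $\sigma_3 = \frac{L_1^{-1}B}{B-L_1^{-1}}$, $\sigma_3^+ = \frac{1}{L_2+\mu_2}$; $D_3$: $\mu_2<0$, $\mu_1>0$, $L_2>\mu_1$, $L_1>\mu_2$, $B\le0$, and ($L_1\ge L_2$ and $E\ge0$) or $L_2>L_1$. (4) $\sigma_4=0$, $\sigma_4^+ = \frac{\mu_1+\mu_2}{\mu_2^2}$; $D_4$: $\mu_2<0$, $\mu_1>0$, $L_1>\mu_2$, and ($B>0$, $L_2>\mu_1$) or ($B>0$, $0<L_2\le\mu_1$) or ($B\le0$, $L_2\le0$). (5) $\sigma_5=0$,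 $\sigma_5^+ = \frac{L_2+\mu_1}{L_2^2}$; $D_5$: $L_1>\mu_1\ge L_2>0$, $L_1>\mu_2$, and $\mu_2\ge0$ or ($\mu_2<0$ and $B\le0$). (6) $\sigma_6 = \frac{L_1+\mu_2}{L_1^2}$, $\sigma_6^+=0$; $D_6$: $L_2>\mu_2\ge L_1>\mu_1\ge0$.
   Context: For $\mu\in\mathbb{R}$ and $L\in(\mu,\infty]$, $\mathcal{F}_{\mu,L}(\mathbb{R}^d)$ is the class of proper lower semicontinuous $f:\mathbb{R}^d\to\mathbb{R}$ with $f-\frac{\mu}{2}\|\cdot\|^2$ convex and, if $L<\infty$, $\frac{L}{2}\|\cdot\|^2-f$ convex ($L$ may be nonpositive). Subdifferential: $\partial f(x) = \{g+\mu x : g\in\partial(f-\frac{\mu}{2}\|\cdot\|^2)(x)\}$ (convex subdifferential), equal to $\{\nabla f(x)\}$ where $f$ is differentiable. $\operatorname{dom}\partial f=\{x:\partial f(x)\ne\emptyset\}$, $\operatorname{range}\partial f=\bigcup_x\partial f(x)$. Conventions: $1/\infty=0$ and expressions with an infinite parameter are understood as limits. *)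

theory Defs
  imports "HOL-Analysis.Analysis"
begin

definition lsc :: "('a::topological_space \<Rightarrow> real) \<Rightarrow> bool" where
  "lsc f \<longleftrightarrow> (\<forall>c. closed {x. f x \<le> c})"

definition Fclass :: "real \<Rightarrow> ereal \<Rightarrow> ('a::euclidean_space \<Rightarrow> real) \<Rightarrow> bool" where
  "Fclass \<mu> L f \<longleftrightarrow> ereal \<mu> < L \<and> lsc f \<and>
     convex_on UNIV (\<lambda>x. f x - \<mu> / 2 * (norm x)\<^sup>2) \<and>
     (L \<noteq> \<infinity> \<longrightarrow> convex_on UNIV (\<lambda>x. real_of_ereal L / 2 * (norm x)\<^sup>2 - f x))"

definition subdiff :: "real \<Rightarrow> ('a::euclidean_space \<Rightarrow> real) \<Rightarrow> 'a \<Rightarrow> 'a set" where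
  "subdiff \<mu> f x = {g + \<mu> *\<^sub>R x | g.
      \<forall>y. f y - \<mu> / 2 * (norm y)\<^sup>2 \<ge> f x - \<mu> / 2 * (norm x)\<^sup>2 + inner g (y - x)}"

definition dom_subdiff :: "real \<Rightarrow> ('a::euclidean_space \<Rightarrow> real) \<Rightarrow> 'a set" where
  "dom_subdiff \<mu> f = {x. subdiff \<mu> f x \<noteq> {}}"

definition range_subdiff :: "real \<Rightarrow> ('a::euclidean_space \<Rightarrow> real) \<Rightarrow> 'a set" where
  "range_subdiff \<mu> f = (\<Union>x. subdiff \<mu> f x)"

definition einv :: "ereal \<Rightarrow> real" where
  "einv L = (if L = \<infinity> then 0 else 1 / real_of_ereal L)"

definition Bq :: "real \<Rightarrow> real \<Rightarrow> ereal \<Rightarrow> real" where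
  "Bq \<mu>1 \<mu>2 L2 = 1 / \<mu>1 + 1 / \<mu>2 + einv L2"

(* E := (L2+mu2)/(L1 L2) * (L2-L1)/(-mu2) + 1/mu1 - 1/L1  (used only for finite L2,
   mu1 > 0, mu2 < 0); for L1 = \<infinity> its limit value. *)
definition Eq :: "real \<Rightarrow> ereal \<Rightarrow> real \<Rightarrow> ereal \<Rightarrow> real" where
  "Eq \<mu>1 L1 \<mu>2 L2 = (let l1 = real_of_ereal L1; l2 = real_of_ereal L2 in
     if L1 = \<infinity> then (l2 + \<mu>2) / (\<mu>2 * l2) + 1 / \<mu>1
     else (l2 + \<mu>2) / (l1 * l2) * ((l2 - l1) / (- \<mu>2)) + 1 / \<mu>1 - 1 / l1)"

definition sigma :: "nat \<Rightarrow> real \<Rightarrow> ereal \<Rightarrow> real \<Rightarrow> ereal \<Rightarrow> real" where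
  "sigma i \<mu>1 L1 \<mu>2 L2 =
    (let l1 = real_of_ereal L1; l2 = real_of_ereal L2; B = Bq \<mu>1 \<mu>2 L2 in
     if i = 1 then einv L2 * (l2 - \<mu>1) * einv (L1 - ereal \<mu>1)
     else if i = 2 then (if \<mu>2 = 0 then einv L1
                        else einv L1 * (1 + (einv L1 - einv L2) / (1 / \<mu>2 - einv L2)))
     else if i = 3 then einv L1 * B / (B - einv L1)
     else if i = 4 then 0
     else if i = 5 then 0
     else (l1 + \<mu>2) / l1\<^sup>2)"

definition sigma_plus :: "nat \<Rightarrow> real \<Rightarrow> ereal \<Rightarrow> real \<Rightarrow> ereal \<Rightarrow> real" where
  "sigma_plus i \<mu>1 L1 \<mu>2 L2 =
    (let l1 = real_of_ereal L1; l2 = real_of_ereal L2 in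
     if i = 1 then (if \<mu>1 = 0 then einv L2
                   else einv L2 * (1 + (einv L2 - einv L1) / (1 / \<mu>1 - einv L1)))
     else if i = 2 then einv L1 * (l1 - \<mu>2) * einv (L2 - ereal \<mu>2)
     else if i = 3 then einv (L2 + ereal \<mu>2)
     else if i = 4 then (\<mu>1 + \<mu>2) / \<mu>2\<^sup>2
     else if i = 5 then (l2 + \<mu>1) / l2\<^sup>2
     else 0)"

definition regime_dom :: "nat \<Rightarrow> real \<Rightarrow> ereal \<Rightarrow> real \<Rightarrow> ereal \<Rightarrow> bool" where
  "regime_dom i \<mu>1 L1 \<mu>2 L2 =
    (let B = Bq \<mu>1 \<mu>2 L2; E = Eq \<mu>1 L1 \<mu>2 L2 in
     if i = 1 then L2 \<le> L1 \<and> ereal \<mu>1 \<le> L2 \<and> 0 \<le> \<mu>1 \<and> ereal \<mu>2 < L1 \<and>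
                   (0 \<le> \<mu>2 \<or> (\<mu>2 < 0 \<and> 0 < \<mu>1 \<and> E \<le> 0))
     else if i = 2 then L1 \<le> L2 \<and> ereal \<mu>2 \<le> L1 \<and> 0 \<le> \<mu>2 \<and> ereal \<mu>1 < L2 \<and> 0 \<le> \<mu>1
     else if i = 3 then \<mu>2 < 0 \<and> 0 < \<mu>1 \<and> ereal \<mu>1 < L2 \<and> ereal \<mu>2 < L1 \<and> B \<le> 0 \<and>
                   ((L2 \<le> L1 \<and> 0 \<le> E) \<or> L1 < L2)
     else if i = 4 then \<mu>2 < 0 \<and> 0 < \<mu>1 \<and> ereal \<mu>2 < L1 \<and>
                   ((0 < B \<and> ereal \<mu>1 < L2) \<or> (0 < B \<and> 0 < L2 \<and> L2 \<le> ereal \<mu>1) \<or>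
                    (B \<le> 0 \<and> L2 \<le> 0))
     else if i = 5 then ereal \<mu>1 < L1 \<and> L2 \<le> ereal \<mu>1 \<and> 0 < L2 \<and> ereal \<mu>2 < L1 \<and>
                   (0 \<le> \<mu>2 \<or> (\<mu>2 < 0 \<and> B \<le> 0))
     else if i = 6 then ereal \<mu>2 < L2 \<and> L1 \<le> ereal \<mu>2 \<and> ereal \<mu>1 < L1 \<and> 0 \<le> \<mu>1
     else False)"

end

(* One DCA step x -> x' has a common subgradient b = g2(x) = g1(x'), so the decrease of
   F = f1 - f2 splits into the two Bregman gaps f1 x - f1 x' - <b, x - x'> and
   f2 x' - f2 x - <b, x' - x>.  Weighted combinations of the interpolation inequalities of
   F_{mu,L} bound them below by sigma/2 |a - b|^2 + psi1 |x - x'|^2 and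
   sigma+/2 |b - c|^2 + psi2 |x - x'|^2, where a = g1(x), c = g2(x') and, in each of the six
   regimes, psi1 + psi2 >= 0.  Telescoping these decreases gives the first bound.  For the
   second, F at x^N - (g1^N - g2^N)/(L1 - mu2) is at least |g1^N - g2^N|^2 / (2 (L1 - mu2))
   below F(x^N), and it is at least inf F. *)

theory Submission
  imports Defs
begin

lemma einv_ereal [simp]: "einv (ereal l) = 1 / l"
  and einv_PInf [simp]: "einv \<infinity> = 0"
  by (simp_all add: einv_def)

lemma einv_nonneg: "0 \<le> L \<Longrightarrow> 0 \<le> einv L"
  by (cases L) simp_all

lemma einv_diff_nonneg: "ereal \<mu> < L \<Longrightarrow> 0 \<le> einv (L - ereal \<mu>)"
  by (cases L) simp_all

section \<open>Quadratic bounds for functions in \<open>Fclass \<mu> L\<close>\<close>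

lemma le_of_le_add_small_multiple:
  fixes a b c :: real
  assumes "\<And>t. 0 < t \<Longrightarrow> t \<le> 1 \<Longrightarrow> a \<le> b + t * c"
  shows "a \<le> b"
proof (rule field_le_epsilon)
  fix e :: real assume e: "0 < e"
  define t where "t = min 1 (e / (\<bar>c\<bar> + 1))"
  have t: "0 < t" "t \<le> 1" using e by (auto simp: t_def)
  have "t * c \<le> t * (\<bar>c\<bar> + 1)" using t by (intro mult_left_mono) auto
  also have "\<dots> \<le> e / (\<bar>c\<bar> + 1) * (\<bar>c\<bar> + 1)"
    by (intro mult_right_mono) (auto simp: t_def)
  also have "\<dots> = e" by simp
  finally show "a \<le> b + e" using assms[OF t] by linarith
qed

lemma Fclass_less: "Fclass \<mu> L f \<Longrightarrow> ereal \<mu> < L"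
  unfolding Fclass_def by simp

lemma Fclass_cases:
  assumes "Fclass \<mu> L f"
  obtains (finite) l where "L = ereal l" "\<mu> < l" | (infinite) "L = \<infinity>"
  using assms unfolding Fclass_def by (cases L) auto

lemma subdiff_lower_bound:
  assumes "g \<in> subdiff \<mu> f x"
  shows "f x + inner g (y - x) + \<mu> / 2 * (norm (y - x))\<^sup>2 \<le> f y"
proof -
  obtain h where g: "g = h + \<mu> *\<^sub>R x"
    and h: "f x - \<mu> / 2 * (norm x)\<^sup>2 + inner h (y - x) \<le> f y - \<mu> / 2 * (norm y)\<^sup>2"
    using assms unfolding subdiff_def by blast
  have "(norm y)\<^sup>2 = (norm x)\<^sup>2 + 2 * inner x (y - x) + (norm (y - x))\<^sup>2"
    by (simp add: power2_norm_eq_inner algebra_simps inner_commute)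
  with h show ?thesis unfolding g by (simp add: inner_add_left algebra_simps)
qed

lemma convex_on_extrapolation:
  fixes h :: "'a::real_vector \<Rightarrow> real"
  assumes h: "convex_on UNIV h" and t: "0 \<le> t"
  shows "(1 + t) * h x \<le> h (x - t *\<^sub>R (y - x)) + t * h y"
proof -
  define z where "z = x - t *\<^sub>R (y - x)"
  define \<theta> where "\<theta> = t / (1 + t)"
  have \<theta>: "0 \<le> \<theta>" "\<theta> \<le> 1" "(1 + t) * (1 - \<theta>) = 1" "(1 + t) * \<theta> = t"
    using t by (simp_all add: \<theta>_def field_simps)
  have "(1 + t) *\<^sub>R ((1 - \<theta>) *\<^sub>R z + \<theta> *\<^sub>R y)
      = ((1 + t) * (1 - \<theta>)) *\<^sub>R z + ((1 + t) * \<theta>) *\<^sub>R y"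
    by (simp add: scaleR_add_right)
  also have "\<dots> = (1 + t) *\<^sub>R x"
    unfolding \<theta>(3,4) by (simp add: z_def algebra_simps)
  finally have "(1 - \<theta>) *\<^sub>R z + \<theta> *\<^sub>R y = x" using t by simp
  with convex_onD[OF h \<theta>(1,2), of z y] have "h x \<le> (1 - \<theta>) * h z + \<theta> * h y" by simp
  hence "(1 + t) * h x \<le> (1 + t) * ((1 - \<theta>) * h z + \<theta> * h y)"
    using t by (intro mult_left_mono) auto
  also have "\<dots> = h z + t * h y"
    using \<theta>(3,4) by (simp only: distrib_left mult.assoc[symmetric])
  finally show ?thesis unfolding z_def .
qed

text \<open>Concavity of \<open>l/2 \<parallel>\<cdot>\<parallel>\<^sup>2 - f\<close> at the reflected points \<open>x - t (y - x)\<close>, where the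
  lower bound of \<open>f\<close> applies, yields the upper bound up to an error \<open>O(t)\<close>.\<close>
lemma Fclass_upper_bound:
  assumes F: "Fclass \<mu> (ereal l) f" and g: "g \<in> subdiff \<mu> f x"
  shows "f y \<le> f x + inner g (y - x) + l / 2 * (norm (y - x))\<^sup>2"
proof (rule le_of_le_add_small_multiple)
  fix t :: real assume t: "0 < t" "t \<le> 1"
  define d where "d = y - x"
  define z where "z = x - t *\<^sub>R d"
  have "convex_on UNIV (\<lambda>x. l / 2 * (norm x)\<^sup>2 - f x)" using F unfolding Fclass_def by auto
  from convex_on_extrapolation[OF this, of t x y] t
  have conv: "(1 + t) * (l / 2 * (norm x)\<^sup>2 - f x) \<le> l / 2 * (norm z)\<^sup>2 - f z + t * (l / 2 * (norm y)\<^sup>2 - f y)"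
    by (simp add: z_def d_def)
  have low: "f x - t * inner g d + \<mu> / 2 * (t\<^sup>2 * (norm d)\<^sup>2) \<le> f z"
    using subdiff_lower_bound[OF g, of z] by (simp add: z_def power_mult_distrib)
  have norms: "(norm z)\<^sup>2 + t * (norm y)\<^sup>2 - (1 + t) * (norm x)\<^sup>2 = (t\<^sup>2 + t) * (norm d)\<^sup>2"
    unfolding z_def d_def power2_norm_eq_inner
    by (simp add: algebra_simps inner_commute power2_eq_square)
  have "t * f y \<le> l / 2 * ((norm z)\<^sup>2 + t * (norm y)\<^sup>2 - (1 + t) * (norm x)\<^sup>2) - f z + (1 + t) * f x"
    using conv by (simp add: algebra_simps add_divide_distrib)
  also have "\<dots> \<le> l / 2 * ((t\<^sup>2 + t) * (norm d)\<^sup>2) - (f x - t * inner g d + \<mu> / 2 * (t\<^sup>2 * (norm d)\<^sup>2)) + (1 + t) * f x"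
    unfolding norms using low by simp
  also have "\<dots> = t * (f x + inner g d + l / 2 * (norm d)\<^sup>2 + t * ((l - \<mu>) / 2 * (norm d)\<^sup>2))"
    by (simp add: field_simps power2_eq_square)
  finally have "t * f y \<le> \<dots>" .
  thus "f y \<le> f x + inner g (y - x) + l / 2 * (norm (y - x))\<^sup>2 + t * ((l - \<mu>) / 2 * (norm (y - x))\<^sup>2)"
    using t by (simp add: d_def)
qed

text \<open>The lower bound at \<open>q\<close> and the upper bound at \<open>p\<close> are compared at \<open>p + t\<close>, where
  \<open>t = (gq - gp + \<mu> (p - q)) / (l - \<mu>)\<close> makes the estimate sharpest.\<close>
lemma Fclass_interpolation:
  assumes F: "Fclass \<mu> (ereal l) f" and gp: "gp \<in> subdiff \<mu> f p" and gq: "gq \<in> subdiff \<mu> f q"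
  shows "\<mu> / 2 * (norm (p - q))\<^sup>2 + 1 / (2 * (l - \<mu>)) * (norm (gp - gq - \<mu> *\<^sub>R (p - q)))\<^sup>2
           \<le> f p - f q - inner gq (p - q)"
proof -
  define c where "c = l - \<mu>"
  define e where "e = p - q"
  define t where "t = (1 / c) *\<^sub>R (gq - gp + \<mu> *\<^sub>R e)"
  have c: "0 < c" using Fclass_less[OF F] by (simp add: c_def)
  have ct: "gq - gp + \<mu> *\<^sub>R e = c *\<^sub>R t" using c by (simp add: t_def)
  have lower: "f q + inner gq (e + t) + \<mu> / 2 * (norm (e + t))\<^sup>2 \<le> f (p + t)"
    using subdiff_lower_bound[OF gq, of "p + t"] by (simp add: e_def algebra_simps)
  have upper: "f (p + t) \<le> f p + inner gp t + l / 2 * (norm t)\<^sup>2"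
    using Fclass_upper_bound[OF F gp, of "p + t"] by simp
  have "(norm (e + t))\<^sup>2 = (norm e)\<^sup>2 + 2 * inner e t + (norm t)\<^sup>2"
    unfolding power2_norm_eq_inner by (simp add: algebra_simps inner_commute)
  moreover have "inner gq t - inner gp t + \<mu> * inner e t = c * (norm t)\<^sup>2"
    using arg_cong[OF ct, of "\<lambda>v. inner v t"]
    by (simp add: algebra_simps power2_norm_eq_inner)
  ultimately have "\<mu> / 2 * (norm e)\<^sup>2 + c / 2 * (norm t)\<^sup>2 \<le> f p - f q - inner gq e"
    using lower upper by (simp add: inner_add_right c_def algebra_simps diff_divide_distrib)
  moreover have "1 / (2 * (l - \<mu>)) * (norm (gp - gq - \<mu> *\<^sub>R e))\<^sup>2 = c / 2 * (norm t)\<^sup>2"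
  proof -
    have "gp - gq - \<mu> *\<^sub>R e = - (c *\<^sub>R t)"
      unfolding ct[symmetric] by simp
    hence "(norm (gp - gq - \<mu> *\<^sub>R e))\<^sup>2 = c\<^sup>2 * (norm t)\<^sup>2"
      by (simp add: power_mult_distrib)
    thus ?thesis
      using c unfolding c_def by (simp add: field_simps power2_eq_square)
  qed
  ultimately show ?thesis
    unfolding e_def by linarith
qed

text \<open>Minimality of \<open>f - \<langle>g, \<cdot>\<rangle>\<close> at \<open>x\<close>, compared along the segment from \<open>x\<close> to \<open>y\<close>
  through the convexity of \<open>f - \<mu>/2 \<parallel>\<cdot>\<parallel>\<^sup>2\<close>, yields the subgradient inequality up to an
  error \<open>O(t)\<close>.\<close>
lemma subdiff_of_argmin:
  assumes F: "Fclass \<mu> L f" and min: "\<And>w. f x - inner g x \<le> f w - inner g w"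
  shows "g \<in> subdiff \<mu> f x"
proof -
  define \<phi> where "\<phi> = (\<lambda>x. f x - \<mu> / 2 * (norm x)\<^sup>2)"
  have cv: "convex_on UNIV \<phi>" using F unfolding Fclass_def \<phi>_def by auto
  have "\<phi> x + inner (g - \<mu> *\<^sub>R x) (y - x) \<le> \<phi> y" for y
  proof (rule le_of_le_add_small_multiple)
    fix t :: real assume t: "0 < t" "t \<le> 1"
    define d where "d = y - x"
    have "\<phi> (x + t *\<^sub>R d) \<le> (1 - t) * \<phi> x + t * \<phi> y"
      using convex_onD[OF cv, of t x y] t by (simp add: d_def algebra_simps)
    moreover have "f x - inner g x \<le> f (x + t *\<^sub>R d) - inner g (x + t *\<^sub>R d)" by (rule min)
    moreover have "(norm (x + t *\<^sub>R d))\<^sup>2 = (norm x)\<^sup>2 + 2 * t * inner x d + t\<^sup>2 * (norm d)\<^sup>2"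
      unfolding power2_norm_eq_inner by (simp add: algebra_simps inner_commute power2_eq_square)
    ultimately have "t * (\<phi> x + inner (g - \<mu> *\<^sub>R x) d) \<le> t * (\<phi> y + t * (\<mu> / 2 * (norm d)\<^sup>2))"
      unfolding \<phi>_def by (simp add: algebra_simps power2_eq_square add_divide_distrib diff_divide_distrib)
    thus "\<phi> x + inner (g - \<mu> *\<^sub>R x) (y - x) \<le> \<phi> y + t * (\<mu> / 2 * (norm (y - x))\<^sup>2)"
      using t by (simp add: d_def)
  qed
  hence "g - \<mu> *\<^sub>R x + \<mu> *\<^sub>R x \<in> subdiff \<mu> f x"
    unfolding subdiff_def \<phi>_def by (intro CollectI exI[of _ "g - \<mu> *\<^sub>R x"]) auto
  thus ?thesis by simp
qed

section \<open>Bregman lower bounds from interpolation\<close>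

definition bregman_lower_bound :: "real \<Rightarrow> real \<Rightarrow> real \<Rightarrow> ('a::euclidean_space \<Rightarrow> real) \<Rightarrow> bool" where
  "bregman_lower_bound \<mu> \<sigma> \<psi> f \<longleftrightarrow> (\<forall>p q gp gq. gp \<in> subdiff \<mu> f p \<longrightarrow> gq \<in> subdiff \<mu> f q \<longrightarrow>
     \<sigma> / 2 * (norm (gp - gq))\<^sup>2 + \<psi> * (norm (p - q))\<^sup>2 \<le> f p - f q - inner gq (p - q))"

lemma bregman_lower_bound_mono:
  "bregman_lower_bound \<mu> \<sigma> \<psi> f \<Longrightarrow> \<psi>' \<le> \<psi> \<Longrightarrow> bregman_lower_bound \<mu> \<sigma> \<psi>' f"
  unfolding bregman_lower_bound_def
  by (smt (verit) mult_right_mono zero_le_power2)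

lemma bregman_lower_bound_strongly_convex: "bregman_lower_bound \<mu> 0 (\<mu> / 2) f"
  unfolding bregman_lower_bound_def
proof (intro allI impI)
  fix p q gp gq assume "gq \<in> subdiff \<mu> f q"
  from subdiff_lower_bound[OF this, of p]
  show "0 / 2 * (norm (gp - gq))\<^sup>2 + \<mu> / 2 * (norm (p - q))\<^sup>2 \<le> f p - f q - inner gq (p - q)"
    by simp
qed

lemma quadratic_form_nonneg:
  fixes e w :: "'a::real_inner"
  assumes a: "0 \<le> a" and b: "0 \<le> b" and c: "c\<^sup>2 \<le> 4 * a * b"
  shows "0 \<le> a * (norm e)\<^sup>2 + b * (norm w)\<^sup>2 + c * inner w e"
proof (cases "a = 0")
  case True
  with b c show ?thesis by simp
next
  case False
  hence a0: "0 < a" using a by simp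
  have "0 \<le> (norm (a *\<^sub>R e + (c / 2) *\<^sub>R w))\<^sup>2" by simp
  also have "\<dots> = a\<^sup>2 * (norm e)\<^sup>2 + a * c * inner w e + c\<^sup>2 / 4 * (norm w)\<^sup>2"
    unfolding power2_norm_eq_inner by (simp add: algebra_simps inner_commute power2_eq_square)
  also have "\<dots> \<le> a\<^sup>2 * (norm e)\<^sup>2 + a * c * inner w e + a * b * (norm w)\<^sup>2"
    using c by (intro add_left_mono mult_right_mono) auto
  also have "\<dots> = a * (a * (norm e)\<^sup>2 + b * (norm w)\<^sup>2 + c * inner w e)"
    by (simp add: algebra_simps power2_eq_square)
  finally show ?thesis using a0 by (simp add: zero_le_mult_iff)
qed

lemma Fclass_interpolation_pair:
  assumes F: "Fclass \<mu> (ereal l) f" and gp: "gp \<in> subdiff \<mu> f p" and gq: "gq \<in> subdiff \<mu> f q"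
  defines "R \<equiv> \<mu> / 2 * (norm (p - q))\<^sup>2 + 1 / (2 * (l - \<mu>)) *
      ((norm (gp - gq))\<^sup>2 - 2 * \<mu> * inner (gp - gq) (p - q) + \<mu>\<^sup>2 * (norm (p - q))\<^sup>2)"
  shows "R \<le> f p - f q - inner gq (p - q)" and "2 * R \<le> inner (gp - gq) (p - q)"
proof -
  have "(norm (gp - gq - \<mu> *\<^sub>R (p - q)))\<^sup>2
      = (norm (gp - gq))\<^sup>2 - 2 * \<mu> * inner (gp - gq) (p - q) + \<mu>\<^sup>2 * (norm (p - q))\<^sup>2"
    and "(norm (gq - gp - \<mu> *\<^sub>R (q - p)))\<^sup>2
      = (norm (gp - gq))\<^sup>2 - 2 * \<mu> * inner (gp - gq) (p - q) + \<mu>\<^sup>2 * (norm (p - q))\<^sup>2"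
    unfolding power2_norm_eq_inner by (simp_all add: algebra_simps inner_commute power2_eq_square)
  hence "R \<le> f p - f q - inner gq (p - q)" and "R \<le> f q - f p - inner gp (q - p)"
    using Fclass_interpolation[OF F gp gq] Fclass_interpolation[OF F gq gp]
    unfolding R_def by (simp_all add: norm_minus_commute)
  moreover have "(f p - f q - inner gq (p - q)) + (f q - f p - inner gp (q - p)) = inner (gp - gq) (p - q)"
    by (simp add: algebra_simps inner_commute)
  ultimately show "R \<le> f p - f q - inner gq (p - q)" and "2 * R \<le> inner (gp - gq) (p - q)"
    by linarith+
qed

text \<open>Adding \<open>(s - 1)/2\<close> times the nonpositive quantity \<open>2 R - \<langle>gp - gq, p - q\<rangle>\<close> to the
  interpolation inequality leaves a quadratic form in \<open>p - q\<close> and \<open>gp - gq\<close>; the hypotheses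
  \<open>A\<close>, \<open>B\<close>, \<open>C\<close> make it positive semidefinite.\<close>
lemma bregman_lower_bound_of_interpolation:
  assumes F: "Fclass \<mu> (ereal l) f" and s: "1 \<le> s"
    and A: "0 \<le> s * (\<mu> + \<mu>\<^sup>2 / (l - \<mu>)) / 2 - \<psi>"
    and B: "0 \<le> s / (l - \<mu>) / 2 - \<sigma> / 2"
    and C: "(- s * \<mu> / (l - \<mu>) - (s - 1) / 2)\<^sup>2
              \<le> 4 * (s * (\<mu> + \<mu>\<^sup>2 / (l - \<mu>)) / 2 - \<psi>) * (s / (l - \<mu>) / 2 - \<sigma> / 2)"
  shows "bregman_lower_bound \<mu> \<sigma> \<psi> f"
  unfolding bregman_lower_bound_def
proof (intro allI impI)
  fix p q gp gq assume gp: "gp \<in> subdiff \<mu> f p" and gq: "gq \<in> subdiff \<mu> f q"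
  define X Y Z where "X = (norm (p - q))\<^sup>2" and "Y = (norm (gp - gq))\<^sup>2" and "Z = inner (gp - gq) (p - q)"
  define k where "k = 1 / (l - \<mu>)"
  have k: "1 / (2 * (l - \<mu>)) = k / 2" "\<mu>\<^sup>2 / (l - \<mu>) = \<mu>\<^sup>2 * k" "s / (l - \<mu>) = s * k"
    "- s * \<mu> / (l - \<mu>) = - s * \<mu> * k"
    unfolding k_def by simp_all
  define R where "R = \<mu> / 2 * X + k / 2 * (Y - 2 * \<mu> * Z + \<mu>\<^sup>2 * X)"
  note interp = Fclass_interpolation_pair[OF F gp gq, folded X_def Y_def Z_def, unfolded k(1), folded R_def]
  have "(s - 1) / 2 * (2 * R - Z) \<le> 0"
    using s interp(2) by (intro mult_nonneg_nonpos) auto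
  with interp(1) have "R + (s - 1) / 2 * (2 * R - Z) \<le> f p - f q - inner gq (p - q)" by linarith
  moreover have "0 \<le> (s * (\<mu> + \<mu>\<^sup>2 / (l - \<mu>)) / 2 - \<psi>) * X + (s / (l - \<mu>) / 2 - \<sigma> / 2) * Y
                   + (- s * \<mu> / (l - \<mu>) - (s - 1) / 2) * Z"
    using quadratic_form_nonneg[OF A B C, of "p - q" "gp - gq"] unfolding X_def Y_def Z_def .
  moreover have "R + (s - 1) / 2 * (2 * R - Z) - \<sigma> / 2 * Y - \<psi> * X
     = (s * (\<mu> + \<mu>\<^sup>2 / (l - \<mu>)) / 2 - \<psi>) * X + (s / (l - \<mu>) / 2 - \<sigma> / 2) * Y
       + (- s * \<mu> / (l - \<mu>) - (s - 1) / 2) * Z"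
    unfolding R_def k by (simp add: field_simps power2_eq_square)
  ultimately show "\<sigma> / 2 * (norm (gp - gq))\<^sup>2 + \<psi> * (norm (p - q))\<^sup>2 \<le> f p - f q - inner gq (p - q)"
    unfolding X_def Y_def by linarith
qed

lemma degenerate_discriminant:
  fixes x T m :: real
  shows "(- x * T / m)\<^sup>2 = 4 * (x\<^sup>2 * T / (2 * m)) * (T / (2 * m))"
  by (simp add: power2_eq_square)

lemma bregman_lower_bound_large_sigma:
  assumes F: "Fclass \<mu> (ereal l) f" and h1: "1 \<le> l * \<sigma>" and h2: "1 \<le> (l + \<mu>) * \<sigma>"
  shows "bregman_lower_bound \<mu> \<sigma> (l * (1 - l * \<sigma>) / 2) f"
proof -
  have lm: "0 < l - \<mu>" using Fclass_less[OF F] by simp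
  define T where "T = (l + \<mu>) * \<sigma> - 1"
  have T: "0 \<le> T" using h2 by (simp add: T_def)
  define s where "s = 2 * l * \<sigma> - 1"
  have s: "1 \<le> s" using h1 by (simp add: s_def)
  have A: "s * (\<mu> + \<mu>\<^sup>2 / (l - \<mu>)) / 2 - l * (1 - l * \<sigma>) / 2 = l\<^sup>2 * T / (2 * (l - \<mu>))"
    unfolding s_def T_def using lm by (simp add: field_simps power2_eq_square)
  have B: "s / (l - \<mu>) / 2 - \<sigma> / 2 = T / (2 * (l - \<mu>))"
    unfolding s_def T_def using lm by (simp add: field_simps)
  have C: "- s * \<mu> / (l - \<mu>) - (s - 1) / 2 = - l * T / (l - \<mu>)"
    unfolding s_def T_def using lm by (simp add: field_simps)
  show ?thesis
    by (rule bregman_lower_bound_of_interpolation[OF F s], unfold A B C degenerate_discriminant)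
      (use lm T in simp_all)
qed

lemma bregman_lower_bound_nonconvex:
  assumes F: "Fclass \<mu> (ereal l) f" and "\<mu> \<le> 0" and "0 \<le> \<sigma>" and h: "(l + \<mu>) * \<sigma> \<le> 1"
  shows "bregman_lower_bound \<mu> \<sigma> (\<mu> * (1 - \<mu> * \<sigma>) / 2) f"
proof -
  have lm: "0 < l - \<mu>" using Fclass_less[OF F] by simp
  define T where "T = 1 - (l + \<mu>) * \<sigma>"
  have T: "0 \<le> T" using h by (simp add: T_def)
  define s where "s = 1 - 2 * \<mu> * \<sigma>"
  have s: "1 \<le> s" using assms by (simp add: s_def mult_nonpos_nonneg)
  have A: "s * (\<mu> + \<mu>\<^sup>2 / (l - \<mu>)) / 2 - \<mu> * (1 - \<mu> * \<sigma>) / 2 = \<mu>\<^sup>2 * T / (2 * (l - \<mu>))"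
    unfolding s_def T_def using lm by (simp add: field_simps power2_eq_square)
  have B: "s / (l - \<mu>) / 2 - \<sigma> / 2 = T / (2 * (l - \<mu>))"
    unfolding s_def T_def using lm by (simp add: field_simps)
  have C: "- s * \<mu> / (l - \<mu>) - (s - 1) / 2 = - \<mu> * T / (l - \<mu>)"
    unfolding s_def T_def using lm by (simp add: field_simps)
  show ?thesis
    by (rule bregman_lower_bound_of_interpolation[OF F s], unfold A B C degenerate_discriminant)
      (use lm T in simp_all)
qed

lemma bregman_lower_bound_small_sigma:
  assumes F: "Fclass \<mu> (ereal l) f" and h: "\<sigma> * (l - \<mu>) < 1"
  shows "bregman_lower_bound \<mu> \<sigma> (\<mu> * (1 - l * \<sigma>) / (2 * (1 - \<sigma> * (l - \<mu>)))) f"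
proof -
  define m where "m = l - \<mu>"
  have m: "0 < m" using Fclass_less[OF F] by (simp add: m_def)
  have l: "l = m + \<mu>" by (simp add: m_def)
  define T where "T = 1 - \<sigma> * m"
  have T: "0 < T" using h by (simp add: T_def m_def)
  have A: "1 * (\<mu> + \<mu>\<^sup>2 / m) / 2 - \<mu> * (1 - l * \<sigma>) / (2 * T) = \<mu>\<^sup>2 / (2 * m * T)"
    unfolding l T_def using m T[unfolded T_def] by (simp add: field_simps power2_eq_square)
  have B: "1 / m / 2 - \<sigma> / 2 = T / (2 * m)"
    unfolding T_def using m by (simp add: field_simps)
  have C: "(- 1 * \<mu> / m - (1 - 1) / 2)\<^sup>2 = 4 * (\<mu>\<^sup>2 / (2 * m * T)) * (T / (2 * m))"
    using m T by (simp add: field_simps power2_eq_square)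
  show ?thesis
    by (rule bregman_lower_bound_of_interpolation[OF F order_refl],
        unfold m_def[symmetric] T_def[symmetric] A B C) (use m T in simp_all)
qed

section \<open>Descent of one DCA step\<close>

definition descent_certificate ::
    "real \<Rightarrow> real \<Rightarrow> real \<Rightarrow> real \<Rightarrow> ('a::euclidean_space \<Rightarrow> real) \<Rightarrow> ('a \<Rightarrow> real) \<Rightarrow> bool" where
  "descent_certificate \<mu>1 \<mu>2 \<sigma> \<sigma>' f1 f2 \<longleftrightarrow> 0 \<le> \<sigma> \<and> 0 \<le> \<sigma>' \<and>
     (\<exists>\<psi>1 \<psi>2. bregman_lower_bound \<mu>1 \<sigma> \<psi>1 f1 \<and> bregman_lower_bound \<mu>2 \<sigma>' \<psi>2 f2 \<and> 0 \<le> \<psi>1 + \<psi>2)"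

lemma descent_certificateI:
  assumes "bregman_lower_bound \<mu>1 \<sigma> \<psi>1 f1" "bregman_lower_bound \<mu>2 \<sigma>' \<psi>2 f2"
    and "0 \<le> \<psi>1 + \<psi>2" "0 \<le> \<sigma>" "0 \<le> \<sigma>'"
  shows "descent_certificate \<mu>1 \<mu>2 \<sigma> \<sigma>' f1 f2"
  using assms unfolding descent_certificate_def by blast

lemma descent_certificate_swap:
  "descent_certificate \<mu>1 \<mu>2 \<sigma> \<sigma>' f1 f2 \<longleftrightarrow> descent_certificate \<mu>2 \<mu>1 \<sigma>' \<sigma> f2 f1"
  unfolding descent_certificate_def by (metis add.commute)

lemma descent_certificate_step:
  assumes cert: "descent_certificate \<mu>1 \<mu>2 \<sigma> \<sigma>' f1 f2"
    and a: "a \<in> subdiff \<mu>1 f1 x" and b1: "b \<in> subdiff \<mu>1 f1 x'"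
    and b2: "b \<in> subdiff \<mu>2 f2 x" and c: "c \<in> subdiff \<mu>2 f2 x'"
  shows "\<sigma> / 2 * (norm (a - b))\<^sup>2 + \<sigma>' / 2 * (norm (b - c))\<^sup>2 \<le> (f1 x - f2 x) - (f1 x' - f2 x')"
proof -
  obtain \<psi>1 \<psi>2 where B1: "bregman_lower_bound \<mu>1 \<sigma> \<psi>1 f1"
    and B2: "bregman_lower_bound \<mu>2 \<sigma>' \<psi>2 f2" and \<psi>: "0 \<le> \<psi>1 + \<psi>2"
    using cert unfolding descent_certificate_def by blast
  have "\<sigma> / 2 * (norm (a - b))\<^sup>2 + \<psi>1 * (norm (x - x'))\<^sup>2 \<le> f1 x - f1 x' - inner b (x - x')"
    using B1 a b1 unfolding bregman_lower_bound_def by blast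
  moreover have "\<sigma>' / 2 * (norm (c - b))\<^sup>2 + \<psi>2 * (norm (x' - x))\<^sup>2 \<le> f2 x' - f2 x - inner b (x' - x)"
    using B2 c b2 unfolding bregman_lower_bound_def by blast
  moreover have "0 \<le> (\<psi>1 + \<psi>2) * (norm (x - x'))\<^sup>2" using \<psi> by simp
  ultimately show ?thesis
    by (simp add: norm_minus_commute inner_diff_right algebra_simps)
qed

lemma telescoping_min_bound:
  fixes F a :: "nat \<Rightarrow> real"
  assumes "0 \<le> \<sigma>" "0 \<le> \<sigma>'"
    and step: "\<And>k. k < N \<Longrightarrow> \<sigma> / 2 * a k + \<sigma>' / 2 * a (Suc k) \<le> F k - F (Suc k)"
  shows "(\<sigma> + \<sigma>') * real N / 2 * Min (a ` {0..N}) \<le> F 0 - F N"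
proof -
  define m where "m = Min (a ` {0..N})"
  have m: "m \<le> a k" if "k \<le> N" for k
    unfolding m_def using that by (intro Min_le) auto
  have "(\<sigma> + \<sigma>') / 2 * m \<le> F k - F (Suc k)" if k: "k < N" for k
  proof -
    have "\<sigma> / 2 * m \<le> \<sigma> / 2 * a k" "\<sigma>' / 2 * m \<le> \<sigma>' / 2 * a (Suc k)"
      using m[of k] m[of "Suc k"] k assms(1,2) by (simp_all add: mult_left_mono)
    with step[OF k] show ?thesis by (simp add: add_divide_distrib distrib_right)
  qed
  hence "(\<Sum>k<N. (\<sigma> + \<sigma>') / 2 * m) \<le> (\<Sum>k<N. F k - F (Suc k))"
    by (intro sum_mono) simp
  thus ?thesis
    by (simp add: sum_lessThan_telescope' m_def algebra_simps)
qed

lemma dc_descent_min_gap: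
  assumes cert: "descent_certificate \<mu>1 \<mu>2 \<sigma> \<sigma>' f1 f2"
    and g1: "\<And>k. k \<le> N \<Longrightarrow> g1 k \<in> subdiff \<mu>1 f1 (x k)"
    and g2: "\<And>k. k \<le> N \<Longrightarrow> g2 k \<in> subdiff \<mu>2 f2 (x k)"
    and g1_Suc: "\<And>k. k < N \<Longrightarrow> g1 (Suc k) = g2 k"
  shows "(\<sigma> + \<sigma>') * real N / 2 * Min ((\<lambda>k. (norm (g1 k - g2 k))\<^sup>2) ` {0..N})
           \<le> (f1 (x 0) - f2 (x 0)) - (f1 (x N) - f2 (x N))"
proof (rule telescoping_min_bound[where F = "\<lambda>k. f1 (x k) - f2 (x k)"])
  show "0 \<le> \<sigma>" "0 \<le> \<sigma>'" using cert unfolding descent_certificate_def by auto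
  fix k assume k: "k < N"
  have "g2 k \<in> subdiff \<mu>1 f1 (x (Suc k))" using g1[of "Suc k"] g1_Suc[OF k] k by simp
  from descent_certificate_step[OF cert g1[of k] this g2[of k] g2[of "Suc k"]] k g1_Suc[OF k]
  show "\<sigma> / 2 * (norm (g1 k - g2 k))\<^sup>2 + \<sigma>' / 2 * (norm (g1 (Suc k) - g2 (Suc k)))\<^sup>2
          \<le> (f1 (x k) - f2 (x k)) - (f1 (x (Suc k)) - f2 (x (Suc k)))"
    by simp
qed

lemma subgradient_gap_le_dc_excess:
  assumes F1: "Fclass \<mu>1 L1 f1" and lt: "ereal \<mu>2 < L1"
    and bdd: "bdd_below (range (\<lambda>y. f1 y - f2 y))"
    and g1: "g1 \<in> subdiff \<mu>1 f1 x" and g2: "g2 \<in> subdiff \<mu>2 f2 x"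
  shows "einv (L1 - ereal \<mu>2) / 2 * (norm (g1 - g2))\<^sup>2 \<le> (f1 x - f2 x) - Inf (range (\<lambda>y. f1 y - f2 y))"
proof -
  define e where "e = einv (L1 - ereal \<mu>2)"
  define y where "y = x - e *\<^sub>R (g1 - g2)"
  have "f1 y - f2 y \<le> (f1 x - f2 x) - e / 2 * (norm (g1 - g2))\<^sup>2"
    using F1
  proof (cases rule: Fclass_cases)
    case (finite l1)
    have e: "(l1 - \<mu>2) * e = 1" using finite lt by (simp add: e_def)
    have "f1 y \<le> f1 x + inner g1 (y - x) + l1 / 2 * (norm (y - x))\<^sup>2"
      using Fclass_upper_bound[OF F1[unfolded finite] g1] .
    moreover have "f2 x + inner g2 (y - x) + \<mu>2 / 2 * (norm (y - x))\<^sup>2 \<le> f2 y"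
      using subdiff_lower_bound[OF g2] .
    moreover have "inner g1 (y - x) - inner g2 (y - x) = - e * (norm (g1 - g2))\<^sup>2"
      by (simp add: y_def power2_norm_eq_inner inner_diff_left algebra_simps)
    moreover have "(norm (y - x))\<^sup>2 = e\<^sup>2 * (norm (g1 - g2))\<^sup>2"
      by (simp add: y_def power_mult_distrib)
    hence "l1 / 2 * (norm (y - x))\<^sup>2 - \<mu>2 / 2 * (norm (y - x))\<^sup>2 = ((l1 - \<mu>2) * e) * e / 2 * (norm (g1 - g2))\<^sup>2"
      by (simp add: power2_eq_square algebra_simps)
    ultimately show ?thesis unfolding e by linarith
  next
    case infinite
    thus ?thesis by (simp add: e_def y_def)
  qed
  moreover have "Inf (range (\<lambda>y. f1 y - f2 y)) \<le> f1 y - f2 y"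
    using bdd by (intro cInf_lower) auto
  ultimately show ?thesis unfolding e_def by linarith
qed

section \<open>The six regimes\<close>

lemma Bq_nonpos_iff:
  assumes "0 < \<mu>1" "\<mu>2 < 0"
  shows "Bq \<mu>1 \<mu>2 L \<le> 0 \<longleftrightarrow> 0 \<le> \<mu>1 + \<mu>2 + \<mu>1 * \<mu>2 * einv L"
proof -
  have eq: "Bq \<mu>1 \<mu>2 L * (\<mu>1 * \<mu>2) = \<mu>1 + \<mu>2 + \<mu>1 * \<mu>2 * einv L"
    using assms by (simp add: Bq_def field_simps)
  have "\<mu>1 * \<mu>2 < 0" using assms by (simp add: mult_pos_neg)
  hence "Bq \<mu>1 \<mu>2 L \<le> 0 \<longleftrightarrow> 0 \<le> Bq \<mu>1 \<mu>2 L * (\<mu>1 * \<mu>2)"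
    by (smt (verit) mult_nonpos_nonpos mult_pos_neg)
  thus ?thesis unfolding eq .
qed

lemma Bq_ereal_nonpos_iff:
  assumes "0 < \<mu>1" "\<mu>2 < 0" "0 < l"
  shows "Bq \<mu>1 \<mu>2 (ereal l) \<le> 0 \<longleftrightarrow> 0 \<le> \<mu>1 * l + \<mu>2 * l + \<mu>1 * \<mu>2"
proof -
  have "\<mu>1 * l + \<mu>2 * l + \<mu>1 * \<mu>2 = (\<mu>1 + \<mu>2 + \<mu>1 * \<mu>2 * einv (ereal l)) * l"
    using assms by (simp add: field_simps)
  thus ?thesis
    using Bq_nonpos_iff[OF assms(1,2)] assms(3) by (simp add: zero_le_mult_iff)
qed

lemma descent_certificate_strongly_convex_side:
  assumes Fb: "Fclass \<mu>b (ereal lb) fb" and lb: "0 < lb" and \<mu>a: "0 \<le> \<mu>a"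
    and key: "0 \<le> \<mu>a * lb + \<mu>b * lb + \<mu>a * \<mu>b"
  shows "descent_certificate \<mu>a \<mu>b 0 ((lb + \<mu>a) / lb\<^sup>2) fa fb"
proof (rule descent_certificateI)
  show "bregman_lower_bound \<mu>a 0 (\<mu>a / 2) fa" by (rule bregman_lower_bound_strongly_convex)
  have "1 \<le> lb * ((lb + \<mu>a) / lb\<^sup>2)" "1 \<le> (lb + \<mu>b) * ((lb + \<mu>a) / lb\<^sup>2)"
    using lb \<mu>a key by (simp_all add: field_simps power2_eq_square)
  from bregman_lower_bound_large_sigma[OF Fb this]
  show "bregman_lower_bound \<mu>b ((lb + \<mu>a) / lb\<^sup>2) (lb * (1 - lb * ((lb + \<mu>a) / lb\<^sup>2)) / 2) fb" .
  show "0 \<le> \<mu>a / 2 + lb * (1 - lb * ((lb + \<mu>a) / lb\<^sup>2)) / 2"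
    using lb by (simp add: field_simps power2_eq_square)
  show "0 \<le> (0::real)" "0 \<le> (lb + \<mu>a) / lb\<^sup>2" using lb \<mu>a by simp_all
qed

lemma regime5_certificate:
  assumes F2: "Fclass \<mu>2 L2 f2" and D: "regime_dom 5 \<mu>1 L1 \<mu>2 L2"
  shows "descent_certificate \<mu>1 \<mu>2 (sigma 5 \<mu>1 L1 \<mu>2 L2) (sigma_plus 5 \<mu>1 L1 \<mu>2 L2) f1 f2"
proof -
  have D': "L2 \<le> ereal \<mu>1" "0 < L2" "0 \<le> \<mu>2 \<or> (\<mu>2 < 0 \<and> Bq \<mu>1 \<mu>2 L2 \<le> 0)"
    using D by (auto simp: regime_dom_def Let_def)
  then obtain l2 where L2: "L2 = ereal l2" and l2: "0 < l2" "l2 \<le> \<mu>1"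
    by (cases L2) auto
  have "0 \<le> \<mu>1 * l2 + \<mu>2 * l2 + \<mu>1 * \<mu>2"
    using D'(3) l2 Bq_ereal_nonpos_iff[of \<mu>1 \<mu>2 l2] by (cases "0 \<le> \<mu>2") (auto simp: L2)
  from descent_certificate_strongly_convex_side[OF F2[unfolded L2] l2(1) _ this] l2
  show ?thesis by (simp add: sigma_def sigma_plus_def Let_def L2)
qed

lemma regime6_certificate:
  assumes F1: "Fclass \<mu>1 L1 f1" and D: "regime_dom 6 \<mu>1 L1 \<mu>2 L2"
  shows "descent_certificate \<mu>1 \<mu>2 (sigma 6 \<mu>1 L1 \<mu>2 L2) (sigma_plus 6 \<mu>1 L1 \<mu>2 L2) f1 f2"
proof -
  have D': "L1 \<le> ereal \<mu>2" "ereal \<mu>1 < L1" "0 \<le> \<mu>1"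
    using D by (auto simp: regime_dom_def Let_def)
  then obtain l1 where L1: "L1 = ereal l1" and l1: "\<mu>1 < l1" "l1 \<le> \<mu>2"
    by (cases L1) auto
  have "0 \<le> \<mu>2 * l1 + \<mu>1 * l1 + \<mu>2 * \<mu>1" using l1 D'(3) by simp
  from descent_certificate_strongly_convex_side[OF F1[unfolded L1] _ _ this] l1 D'(3)
  have "descent_certificate \<mu>2 \<mu>1 0 ((l1 + \<mu>2) / l1\<^sup>2) f2 f1" by simp
  thus ?thesis by (simp add: descent_certificate_swap sigma_def sigma_plus_def Let_def L1)
qed

lemma regime4_certificate:
  assumes F2: "Fclass \<mu>2 L2 f2" and D: "regime_dom 4 \<mu>1 L1 \<mu>2 L2"
    and mu: "0 < \<mu>1 + \<mu>2 \<or> (\<mu>1 = 0 \<and> \<mu>2 = 0)"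
  shows "descent_certificate \<mu>1 \<mu>2 (sigma 4 \<mu>1 L1 \<mu>2 L2) (sigma_plus 4 \<mu>1 L1 \<mu>2 L2) f1 f2"
proof -
  have D': "\<mu>2 < 0" "0 < \<mu>1"
    "(0 < Bq \<mu>1 \<mu>2 L2 \<and> ereal \<mu>1 < L2) \<or> (0 < Bq \<mu>1 \<mu>2 L2 \<and> 0 < L2 \<and> L2 \<le> ereal \<mu>1) \<or>
     (Bq \<mu>1 \<mu>2 L2 \<le> 0 \<and> L2 \<le> 0)"
    using D by (auto simp: regime_dom_def Let_def)
  have m: "0 < \<mu>1 + \<mu>2" using mu D' by auto
  have "L2 \<noteq> \<infinity>" using D' m Bq_nonpos_iff[of \<mu>1 \<mu>2 \<infinity>] by auto
  with F2 obtain l2 where L2: "L2 = ereal l2" and l2: "\<mu>2 < l2"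
    by (cases rule: Fclass_cases) auto
  have "(l2 + \<mu>2) * (\<mu>1 + \<mu>2) \<le> \<mu>2\<^sup>2"
  proof (cases "0 < l2")
    case True
    hence "\<mu>1 * l2 + \<mu>2 * l2 + \<mu>1 * \<mu>2 < 0"
      using D' Bq_ereal_nonpos_iff[of \<mu>1 \<mu>2 l2] by (auto simp: L2)
    thus ?thesis by (simp add: algebra_simps power2_eq_square)
  next
    case False
    with D'(1) m have "(l2 + \<mu>2) * (\<mu>1 + \<mu>2) \<le> 0"
      by (intro mult_nonpos_nonneg) auto
    thus ?thesis by (meson order_trans zero_le_power2)
  qed
  hence "(l2 + \<mu>2) * ((\<mu>1 + \<mu>2) / \<mu>2\<^sup>2) \<le> 1" using D'(1) by (simp add: field_simps)
  from bregman_lower_bound_nonconvex[OF F2[unfolded L2] _ _ this] D'(1) m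
  have "bregman_lower_bound \<mu>2 ((\<mu>1 + \<mu>2) / \<mu>2\<^sup>2) (- \<mu>1 / 2) f2"
    by (simp add: field_simps power2_eq_square)
  hence "descent_certificate \<mu>1 \<mu>2 0 ((\<mu>1 + \<mu>2) / \<mu>2\<^sup>2) f1 f2"
    by (intro descent_certificateI[OF bregman_lower_bound_strongly_convex]) (use m in auto)
  thus ?thesis by (simp add: sigma_def sigma_plus_def)
qed

lemma bregman_lower_bound_regime3_f1:
  assumes F: "Fclass \<mu> L f" and \<mu>: "0 < \<mu>" and B: "B \<le> 0"
  shows "bregman_lower_bound \<mu> (einv L * B / (B - einv L)) (\<mu> / (2 * (1 - \<mu> * B))) f"
  using F
proof (cases rule: Fclass_cases)
  case (finite l)
  have l: "0 < l" using finite \<mu> by simp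
  have lB: "l * B \<le> 0" "\<mu> * B \<le> 0" using l \<mu> B by (simp_all add: mult_nonneg_nonpos)
  have \<sigma>: "1 / l * B / (B - 1 / l) = B / (l * B - 1)"
    using l lB by (simp add: field_simps)
  have "B / (l * B - 1) * (l - \<mu>) = 1 - (1 - \<mu> * B) / (1 - l * B)"
    using lB by (simp add: field_simps)
  moreover have "0 < (1 - \<mu> * B) / (1 - l * B)" using lB by simp
  ultimately have "B / (l * B - 1) * (l - \<mu>) < 1" by linarith
  moreover have "\<mu> * (1 - l * (B / (l * B - 1))) / (2 * (1 - B / (l * B - 1) * (l - \<mu>)))
      = \<mu> / (2 * (1 - \<mu> * B))"
  proof -
    have "1 - l * (B / (l * B - 1)) = 1 / (1 - l * B)" using lB by (simp add: field_simps)
    moreover have "1 - B / (l * B - 1) * (l - \<mu>) = (1 - \<mu> * B) / (1 - l * B)"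
      using \<open>B / (l * B - 1) * (l - \<mu>) = _\<close> by simp
    moreover have "\<mu> * (1 / a) / (2 * (b / a)) = \<mu> / (2 * b)" if "a \<noteq> 0" for a b :: real
      using that by (cases "b = 0") (simp_all add: field_simps)
    ultimately show ?thesis using lB by simp
  qed
  ultimately show ?thesis
    using bregman_lower_bound_small_sigma[OF F[unfolded finite]] unfolding finite einv_ereal \<sigma> by metis
next
  case infinite
  have "\<mu> * B \<le> 0" using \<mu> B by (simp add: mult_nonneg_nonpos)
  hence "\<mu> / (2 * (1 - \<mu> * B)) \<le> \<mu> / 2"
    using \<mu> by (intro divide_left_mono) (auto simp: mult.commute)
  from bregman_lower_bound_mono[OF bregman_lower_bound_strongly_convex this]
  show ?thesis unfolding infinite by simp
qed

lemma bregman_lower_bound_regime3_f2: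
  assumes F: "Fclass \<mu> L f" and "\<mu> \<le> 0" and L: "0 < L" and c: "0 < 1 + \<mu> * einv L"
  shows "bregman_lower_bound \<mu> (einv (L + ereal \<mu>)) (\<mu> / (2 * (1 + \<mu> * einv L))) f"
  using F
proof (cases rule: Fclass_cases)
  case (finite l)
  have l: "0 < l" "0 < l + \<mu>" using L c finite by (simp_all add: field_simps)
  have "(l + \<mu>) * (1 / (l + \<mu>)) \<le> 1" using l by simp
  from bregman_lower_bound_nonconvex[OF F[unfolded finite] \<open>\<mu> \<le> 0\<close> _ this] l
  show ?thesis unfolding finite by (simp add: field_simps)
next
  case infinite
  thus ?thesis using bregman_lower_bound_strongly_convex by simp
qed

lemma regime3_certificate:
  assumes F1: "Fclass \<mu>1 L1 f1" and F2: "Fclass \<mu>2 L2 f2" and D: "regime_dom 3 \<mu>1 L1 \<mu>2 L2"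
  shows "descent_certificate \<mu>1 \<mu>2 (sigma 3 \<mu>1 L1 \<mu>2 L2) (sigma_plus 3 \<mu>1 L1 \<mu>2 L2) f1 f2"
proof -
  define B where "B = Bq \<mu>1 \<mu>2 L2"
  define c where "c = 1 + \<mu>2 * einv L2"
  have D': "\<mu>2 < 0" "0 < \<mu>1" "ereal \<mu>1 < L2" "B \<le> 0"
    using D by (auto simp: regime_dom_def Let_def B_def)
  have L2: "0 < L2" using D'(2,3) by (cases L2) auto
  have "0 \<le> \<mu>1 + \<mu>2 + \<mu>1 * \<mu>2 * einv L2"
    using Bq_nonpos_iff[OF D'(2,1)] D'(4) unfolding B_def by blast
  hence "0 < \<mu>1 * c" using D'(1) unfolding c_def by (simp add: algebra_simps)
  hence c: "0 < c" using D'(2) by (simp add: zero_less_mult_iff)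
  have Bc: "1 - \<mu>1 * B = - \<mu>1 * c / \<mu>2"
    using D'(1,2) unfolding B_def c_def Bq_def by (simp add: field_simps)
  have "0 < L2 + ereal \<mu>2"
  proof (cases L2)
    case (real l2)
    with L2 c have "0 < l2 * c" by simp
    thus ?thesis using real L2 unfolding c_def by (simp add: field_simps)
  qed (use L2 in auto)
  hence "0 \<le> einv (L2 + ereal \<mu>2)" by (intro einv_nonneg) simp
  moreover have "0 \<le> einv L1 * B / (B - einv L1)"
  proof -
    have "0 \<le> einv L1" using Fclass_less[OF F1] D'(2) by (intro einv_nonneg) (cases L1, auto)
    with D'(4) show ?thesis by (simp add: divide_nonpos_nonpos mult_nonneg_nonpos)
  qed
  moreover have "0 \<le> \<mu>1 / (2 * (1 - \<mu>1 * B)) + \<mu>2 / (2 * c)"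
    unfolding Bc using D'(1,2) c by (simp add: field_simps)
  ultimately have "descent_certificate \<mu>1 \<mu>2 (einv L1 * B / (B - einv L1)) (einv (L2 + ereal \<mu>2)) f1 f2"
    using descent_certificateI[OF bregman_lower_bound_regime3_f1[OF F1 D'(2,4)]
      bregman_lower_bound_regime3_f2[OF F2 _ L2 c[unfolded c_def]]] D'(1)
    unfolding c_def by simp
  thus ?thesis by (simp add: sigma_def sigma_plus_def Let_def B_def)
qed

lemma bregman_lower_bound_nested_outer:
  assumes F: "Fclass \<mu> L f" and \<mu>: "0 \<le> \<mu>" and l: "0 < l" "\<mu> \<le> l" "ereal l \<le> L"
  shows "bregman_lower_bound \<mu> (1 / l * (l - \<mu>) * einv (L - ereal \<mu>))
           (\<mu> * (1 - l * einv L) / (2 * (1 - \<mu> * einv L))) f"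
  using F
proof (cases rule: Fclass_cases)
  case infinite
  thus ?thesis using bregman_lower_bound_strongly_convex by simp
next
  case (finite la)
  have la: "0 < la" "l \<le> la" "\<mu> < la" using finite l by auto
  show ?thesis
  proof (cases "\<mu> = 0")
    case True
    have "1 \<le> la * (1 / la)" "1 \<le> (la + \<mu>) * (1 / la)" using la True by simp_all
    from bregman_lower_bound_large_sigma[OF F[unfolded finite] this]
    show ?thesis using l la True unfolding finite by simp
  next
    case False
    with \<mu> have \<mu>0: "0 < \<mu>" by simp
    define \<sigma> where "\<sigma> = (l - \<mu>) / (l * (la - \<mu>))"
    have e0: "1 - \<sigma> * (la - \<mu>) = \<mu> / l" using l la by (simp add: \<sigma>_def field_simps)
    have e1: "1 - la * \<sigma> = \<mu> * (la - l) / (l * (la - \<mu>))" using l la by (simp add: \<sigma>_def field_simps)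
    have "0 < \<mu> / l" using \<mu>0 l by simp
    with e0 have "\<sigma> * (la - \<mu>) < 1" by linarith
    moreover have "\<mu> * (1 - la * \<sigma>) / (2 * (1 - \<sigma> * (la - \<mu>))) = \<mu> * (la - l) / (2 * (la - \<mu>))"
      unfolding e0 e1 using l la \<mu>0 by (simp add: field_simps)
    ultimately have "bregman_lower_bound \<mu> \<sigma> (\<mu> * (la - l) / (2 * (la - \<mu>))) f"
      using bregman_lower_bound_small_sigma[OF F[unfolded finite]] by metis
    moreover have "1 / l * (l - \<mu>) * einv (L - ereal \<mu>) = \<sigma>"
      using finite l la by (simp add: \<sigma>_def)
    moreover have "\<mu> * (1 - l * einv L) / (2 * (1 - \<mu> * einv L)) = \<mu> * (la - l) / (2 * (la - \<mu>))"
      using finite la by (simp add: field_simps)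
    ultimately show ?thesis by simp
  qed
qed

lemma nested_inner_sigma:
  assumes \<mu>: "0 \<le> \<mu>a" and l: "0 < lb" "\<mu>a \<le> lb" "ereal lb \<le> La" and La: "ereal \<mu>a < La"
  defines "\<tau> \<equiv> if \<mu>a = 0 then 1 / lb else 1 / lb * (1 + (1 / lb - einv La) / (1 / \<mu>a - einv La))"
  shows "1 \<le> lb * \<tau>"
    and "lb * (1 - lb * \<tau>) / 2 = - (\<mu>a * (1 - lb * einv La) / (2 * (1 - \<mu>a * einv La)))"
proof -
  define u where "u = einv La"
  have "0 \<le> u \<and> u \<le> 1 / lb \<and> \<mu>a * u < 1"
  proof (cases La)
    case (real la)
    with l La have "0 < lb" "lb \<le> la" "\<mu>a < la" by auto
    thus ?thesis using real by (simp add: u_def frac_le)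
  qed (use l La in \<open>auto simp: u_def\<close>)
  hence u: "0 \<le> u" "u \<le> 1 / lb" "\<mu>a * u < 1" by auto
  have "1 \<le> lb * \<tau> \<and> lb * (1 - lb * \<tau>) / 2 = - (\<mu>a * (1 - lb * u) / (2 * (1 - \<mu>a * u)))"
  proof (cases "\<mu>a = 0")
    case False
    with \<mu> have \<mu>0: "0 < \<mu>a" by simp
    have D: "0 < 1 / \<mu>a - u" using u(3) \<mu>0 by (simp add: field_simps)
    have "lb * \<tau> = 1 + (1 / lb - u) / (1 / \<mu>a - u)"
      using False l unfolding \<tau>_def u_def by simp
    moreover have "0 \<le> (1 / lb - u) / (1 / \<mu>a - u)" using u(2) D by simp
    moreover have "lb * ((1 / lb - u) / (1 / \<mu>a - u)) = \<mu>a * (1 - lb * u) / (1 - \<mu>a * u)"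
      using l \<mu>0 D u(3) by (simp add: field_simps)
    ultimately show ?thesis by (simp add: algebra_simps)
  qed (use l in \<open>simp add: \<tau>_def\<close>)
  thus "1 \<le> lb * \<tau>" "lb * (1 - lb * \<tau>) / 2 = - (\<mu>a * (1 - lb * einv La) / (2 * (1 - \<mu>a * einv La)))"
    unfolding u_def by blast+
qed

text \<open>Regimes 1 and 2 are mirror images: the function \<open>fa\<close>, whose upper curvature \<open>La\<close>
  dominates the upper curvature \<open>lb\<close> of \<open>fb\<close>, gets the small-\<open>\<sigma>\<close> bound and \<open>fb\<close> the
  large-\<open>\<sigma>\<close> bound; their \<open>\<psi>\<close>'s cancel.\<close>
lemma descent_certificate_nested:
  assumes Fa: "Fclass \<mu>a La fa" and Fb: "Fclass \<mu>b (ereal lb) fb"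
    and ineqs: "0 \<le> \<mu>a" "0 < lb" "\<mu>a \<le> lb" "ereal lb \<le> La"
  defines "\<tau> \<equiv> if \<mu>a = 0 then 1 / lb else 1 / lb * (1 + (1 / lb - einv La) / (1 / \<mu>a - einv La))"
  assumes key: "1 \<le> (lb + \<mu>b) * \<tau>"
  shows "descent_certificate \<mu>a \<mu>b (1 / lb * (lb - \<mu>a) * einv (La - ereal \<mu>a)) \<tau> fa fb"
proof (rule descent_certificateI)
  note \<tau> = nested_inner_sigma[OF ineqs Fclass_less[OF Fa], folded \<tau>_def]
  show "bregman_lower_bound \<mu>a (1 / lb * (lb - \<mu>a) * einv (La - ereal \<mu>a))
      (\<mu>a * (1 - lb * einv La) / (2 * (1 - \<mu>a * einv La))) fa"
    by (rule bregman_lower_bound_nested_outer[OF Fa ineqs])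
  show "bregman_lower_bound \<mu>b \<tau> (lb * (1 - lb * \<tau>) / 2) fb"
    by (rule bregman_lower_bound_large_sigma[OF Fb \<tau>(1) key])
  show "0 \<le> \<mu>a * (1 - lb * einv La) / (2 * (1 - \<mu>a * einv La)) + lb * (1 - lb * \<tau>) / 2"
    unfolding \<tau>(2) by simp
  show "0 \<le> 1 / lb * (lb - \<mu>a) * einv (La - ereal \<mu>a)"
    using ineqs einv_diff_nonneg[OF Fclass_less[OF Fa]] by simp
  show "0 \<le> \<tau>" using \<tau>(1) ineqs(2) by (smt (verit) mult_pos_neg)
qed

text \<open>Here \<open>u\<close> plays the role of \<open>1/L1\<close>, and \<open>E\<close> is \<^const>\<open>Eq\<close> written in terms of \<open>u\<close>.\<close>
lemma inner_sigma_bound_of_E_nonpos: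
  fixes \<mu>1 \<mu>2 l u :: real
  assumes "0 < \<mu>1" "0 < l" "\<mu>2 < 0" and pos: "0 < 1 / \<mu>1 - u"
    and E: "(l + \<mu>2) * (l * u - 1) / (- \<mu>2 * l) + 1 / \<mu>1 - u \<le> 0"
  shows "1 \<le> (l + \<mu>2) * (1 / l * (1 + (1 / l - u) / (1 / \<mu>1 - u)))"
proof -
  define D where "D = 1 / \<mu>1 - u"
  have Dpos: "0 < D" using pos by (simp add: D_def)
  have "0 \<le> (l + \<mu>2) * (1 - l * u) + \<mu>2 * l * D"
  proof -
    have "((l + \<mu>2) * (l * u - 1) / (- \<mu>2 * l) + D) * (\<mu>2 * l) \<ge> 0"
      using E assms(2,3) unfolding D_def by (intro mult_nonpos_nonpos) (auto simp: mult_neg_pos less_imp_le)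
    moreover have "((l + \<mu>2) * (l * u - 1) / (- \<mu>2 * l) + D) * (\<mu>2 * l) = (l + \<mu>2) * (1 - l * u) + \<mu>2 * l * D"
      using assms(2,3) by (simp add: field_simps)
    ultimately show ?thesis by simp
  qed
  moreover have "(l + \<mu>2) * (1 / l * (1 + (1 / l - u) / D)) - 1 = ((l + \<mu>2) * (1 - l * u) + \<mu>2 * l * D) / (l\<^sup>2 * D)"
    using assms(2) Dpos by (simp add: field_simps power2_eq_square)
  ultimately show ?thesis
    using assms(2) Dpos unfolding D_def[symmetric] by (smt (verit) divide_nonneg_pos zero_less_power mult_pos_pos)
qed

lemma regime1_inner_sigma_bound:
  assumes \<mu>: "0 < \<mu>1" "\<mu>2 < 0" and l2: "\<mu>1 \<le> l2" "ereal l2 \<le> L1" and L1: "ereal \<mu>1 < L1"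
    and E: "Eq \<mu>1 L1 \<mu>2 (ereal l2) \<le> 0"
  shows "1 \<le> (l2 + \<mu>2) * (1 / l2 * (1 + (1 / l2 - einv L1) / (1 / \<mu>1 - einv L1)))"
proof (rule inner_sigma_bound_of_E_nonpos[OF \<mu>(1) _ \<mu>(2)])
  show "0 < l2" using \<mu> l2 by simp
  show "0 < 1 / \<mu>1 - einv L1"
    using \<mu> L1 by (cases L1) (simp_all add: frac_less2)
  show "(l2 + \<mu>2) * (l2 * einv L1 - 1) / (- \<mu>2 * l2) + 1 / \<mu>1 - einv L1 \<le> 0"
  proof (cases L1)
    case (real l1)
    have "0 < l1" using real l2 \<mu> by simp
    with E real show ?thesis by (simp add: Eq_def field_simps)
  next
    case PInf
    have "(l2 + \<mu>2) * (l2 * einv L1 - 1) / (- \<mu>2 * l2) = (l2 + \<mu>2) / (\<mu>2 * l2)"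
      using PInf by (simp add: diff_divide_distrib add_divide_distrib)
    with E PInf show ?thesis by (simp add: Eq_def)
  next
    case MInf
    with L1 show ?thesis by simp
  qed
qed

lemma regime1_certificate:
  assumes F1: "Fclass \<mu>1 L1 f1" and F2: "Fclass \<mu>2 L2 f2" and D: "regime_dom 1 \<mu>1 L1 \<mu>2 L2"
    and mu: "0 < \<mu>1 + \<mu>2 \<or> (\<mu>1 = 0 \<and> \<mu>2 = 0)" and Lfin: "L1 \<noteq> \<infinity> \<or> L2 \<noteq> \<infinity>"
  shows "descent_certificate \<mu>1 \<mu>2 (sigma 1 \<mu>1 L1 \<mu>2 L2) (sigma_plus 1 \<mu>1 L1 \<mu>2 L2) f1 f2"
proof -
  have D': "L2 \<le> L1" "ereal \<mu>1 \<le> L2" "0 \<le> \<mu>1"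
    "0 \<le> \<mu>2 \<or> (\<mu>2 < 0 \<and> 0 < \<mu>1 \<and> Eq \<mu>1 L1 \<mu>2 L2 \<le> 0)"
    using D by (auto simp: regime_dom_def Let_def)
  from F2 D'(1) Lfin obtain l2 where L2: "L2 = ereal l2" and "\<mu>2 < l2"
    by (cases rule: Fclass_cases) auto
  with D' mu have l2: "0 < l2" "\<mu>1 \<le> l2" "ereal l2 \<le> L1" by auto
  define \<tau> where "\<tau> = (if \<mu>1 = 0 then 1 / l2 else 1 / l2 * (1 + (1 / l2 - einv L1) / (1 / \<mu>1 - einv L1)))"
  have "1 \<le> (l2 + \<mu>2) * \<tau>"
  proof (cases "0 \<le> \<mu>2")
    case True
    have "1 \<le> l2 * \<tau>" using nested_inner_sigma(1)[OF D'(3) l2 Fclass_less[OF F1]] by (simp add: \<tau>_def)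
    with True show ?thesis by (smt (verit) mult_right_mono mult_pos_neg l2(1))
  next
    case False
    with D'(4) have "\<mu>2 < 0" "0 < \<mu>1" "Eq \<mu>1 L1 \<mu>2 (ereal l2) \<le> 0" by (auto simp: L2)
    with regime1_inner_sigma_bound[OF _ _ l2(2,3) Fclass_less[OF F1]] show ?thesis
      by (simp add: \<tau>_def)
  qed
  moreover have "sigma 1 \<mu>1 L1 \<mu>2 L2 = 1 / l2 * (l2 - \<mu>1) * einv (L1 - ereal \<mu>1)"
    and "sigma_plus 1 \<mu>1 L1 \<mu>2 L2 = \<tau>"
    by (simp_all add: sigma_def sigma_plus_def Let_def L2 \<tau>_def)
  ultimately show ?thesis
    using descent_certificate_nested[OF F1 F2[unfolded L2] D'(3) l2(1,2,3), folded \<tau>_def] by simp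
qed

lemma regime2_certificate:
  assumes F1: "Fclass \<mu>1 L1 f1" and F2: "Fclass \<mu>2 L2 f2" and D: "regime_dom 2 \<mu>1 L1 \<mu>2 L2"
    and Lfin: "L1 \<noteq> \<infinity> \<or> L2 \<noteq> \<infinity>"
  shows "descent_certificate \<mu>1 \<mu>2 (sigma 2 \<mu>1 L1 \<mu>2 L2) (sigma_plus 2 \<mu>1 L1 \<mu>2 L2) f1 f2"
proof -
  have D': "L1 \<le> L2" "ereal \<mu>2 \<le> L1" "0 \<le> \<mu>2" "0 \<le> \<mu>1"
    using D by (auto simp: regime_dom_def Let_def)
  from F1 D'(1) Lfin obtain l1 where L1: "L1 = ereal l1" and "\<mu>1 < l1"
    by (cases rule: Fclass_cases) auto
  with D' have l1: "0 < l1" "\<mu>2 \<le> l1" "ereal l1 \<le> L2" by auto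
  define \<tau> where "\<tau> = (if \<mu>2 = 0 then 1 / l1 else 1 / l1 * (1 + (1 / l1 - einv L2) / (1 / \<mu>2 - einv L2)))"
  have "1 \<le> l1 * \<tau>" using nested_inner_sigma(1)[OF D'(3) l1 Fclass_less[OF F2]] by (simp add: \<tau>_def)
  hence "1 \<le> (l1 + \<mu>1) * \<tau>" using D'(4) l1(1) by (smt (verit) mult_right_mono mult_pos_neg)
  moreover have "sigma 2 \<mu>1 L1 \<mu>2 L2 = \<tau>"
    and "sigma_plus 2 \<mu>1 L1 \<mu>2 L2 = 1 / l1 * (l1 - \<mu>2) * einv (L2 - ereal \<mu>2)"
    by (simp_all add: sigma_def sigma_plus_def Let_def L1 \<tau>_def)
  ultimately show ?thesis
    using descent_certificate_nested[OF F2 F1[unfolded L1] D'(3) l1, folded \<tau>_def]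
    by (simp add: descent_certificate_swap)
qed

lemma regime_certificate:
  assumes F1: "Fclass \<mu>1 L1 f1" and F2: "Fclass \<mu>2 L2 f2"
    and i: "i \<in> {1..6}" and D: "regime_dom i \<mu>1 L1 \<mu>2 L2"
    and mu: "0 < \<mu>1 + \<mu>2 \<or> (\<mu>1 = 0 \<and> \<mu>2 = 0)" and Lfin: "L1 \<noteq> \<infinity> \<or> L2 \<noteq> \<infinity>"
  shows "descent_certificate \<mu>1 \<mu>2 (sigma i \<mu>1 L1 \<mu>2 L2) (sigma_plus i \<mu>1 L1 \<mu>2 L2) f1 f2"
proof -
  have "i = 1 \<or> i = 2 \<or> i = 3 \<or> i = 4 \<or> i = 5 \<or> i = 6" using i by auto
  thus ?thesis
    using regime1_certificate[OF F1 F2 _ mu Lfin] regime2_certificate[OF F1 F2 _ Lfin]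
      regime3_certificate[OF F1 F2] regime4_certificate[OF F2 _ mu]
      regime5_certificate[OF F2] regime6_certificate[OF F1] D
    by auto
qed

theorem corollary1:
  fixes f1 f2 :: "'a::euclidean_space \<Rightarrow> real"
    and \<mu>1 \<mu>2 :: real and L1 L2 :: ereal
    and N :: nat and x g1 g2 :: "nat \<Rightarrow> 'a" and i :: nat
  assumes mu1: "0 \<le> \<mu>1"
    and F1: "Fclass \<mu>1 L1 f1" and F2: "Fclass \<mu>2 L2 f2"
    and bdd: "bdd_below (range (\<lambda>y. f1 y - f2 y))"
    and dom_ne: "dom_subdiff \<mu>1 f1 \<noteq> {}"
    and dom_sub: "dom_subdiff \<mu>1 f1 \<subseteq> dom_subdiff \<mu>2 f2"
    and rng_sub: "range_subdiff \<mu>2 f2 \<subseteq> range_subdiff \<mu>1 f1"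
    and Lfin: "L1 \<noteq> \<infinity> \<or> L2 \<noteq> \<infinity>"
    and mu_cond: "\<mu>1 + \<mu>2 > 0 \<or> (\<mu>1 = 0 \<and> \<mu>2 = 0)"
    and N1: "1 \<le> N"
    and x0: "x 0 \<in> dom_subdiff \<mu>1 f1"
    and g2_sub: "\<And>k. k < N \<Longrightarrow> g2 k \<in> subdiff \<mu>2 f2 (x k)"
    and x_argmin: "\<And>k w. k < N \<Longrightarrow> f1 (x (Suc k)) - inner (g2 k) (x (Suc k)) \<le> f1 w - inner (g2 k) w"
    and g1_def: "\<And>k. k < N \<Longrightarrow> g1 (Suc k) = g2 k"
    and g10: "g1 0 \<in> subdiff \<mu>1 f1 (x 0)"
    and g2N: "g2 N \<in> subdiff \<mu>2 f2 (x N)"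
    and i_range: "i \<in> {1..6}"
    and D: "regime_dom i \<mu>1 L1 \<mu>2 L2"
  shows "(let F = (\<lambda>y. f1 y - f2 y);
              Flo = Inf (range F);
              p = sigma i \<mu>1 L1 \<mu>2 L2 + sigma_plus i \<mu>1 L1 \<mu>2 L2;
              m = Min ((\<lambda>k. (norm (g1 k - g2 k))\<^sup>2) ` {0..N})
          in (0 < p * real N \<longrightarrow> m / 2 \<le> (F (x 0) - F (x N)) / (p * real N)) \<and>
             (ereal \<mu>2 < L1 \<and> 0 < p * real N + einv (L1 - ereal \<mu>2) \<longrightarrow>
                m / 2 \<le> (F (x 0) - Flo) / (p * real N + einv (L1 - ereal \<mu>2))))"
proof -
  \<comment> \<open>The assumptions on the domains and ranges of the subdifferentials, on \<open>x 0\<close> and on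
    \<open>N\<close> only make the DCA iteration well defined; here the iterates are given.\<close>
  define F where "F = (\<lambda>y. f1 y - f2 y)"
  define p where "p = sigma i \<mu>1 L1 \<mu>2 L2 + sigma_plus i \<mu>1 L1 \<mu>2 L2"
  define m where "m = Min ((\<lambda>k. (norm (g1 k - g2 k))\<^sup>2) ` {0..N})"
  define e where "e = einv (L1 - ereal \<mu>2)"
  have g1: "g1 k \<in> subdiff \<mu>1 f1 (x k)" if "k \<le> N" for k
    using that g10 subdiff_of_argmin[OF F1 x_argmin] g1_def by (cases k) auto
  have g2: "g2 k \<in> subdiff \<mu>2 f2 (x k)" if "k \<le> N" for k
    using that g2_sub g2N by (cases "k = N") auto
  have descent: "p * real N / 2 * m \<le> F (x 0) - F (x N)"
    using dc_descent_min_gap[OF regime_certificate[OF F1 F2 i_range D mu_cond Lfin], of N g1 x g2,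
        OF g1 g2 g1_def]
    by (simp add: F_def p_def m_def)
  have excess: "e / 2 * m \<le> F (x N) - Inf (range F)" if lt: "ereal \<mu>2 < L1"
  proof -
    have "m \<le> (norm (g1 N - g2 N))\<^sup>2" unfolding m_def by (intro Min_le) auto
    hence "e / 2 * m \<le> e / 2 * (norm (g1 N - g2 N))\<^sup>2"
      using einv_diff_nonneg[OF lt] unfolding e_def by (intro mult_left_mono) auto
    also have "\<dots> \<le> F (x N) - Inf (range F)"
      using subgradient_gap_le_dc_excess[OF F1 lt bdd g1[of N] g2[of N]] unfolding F_def e_def by simp
    finally show ?thesis .
  qed
  show ?thesis
    unfolding Let_def F_def[symmetric] p_def[symmetric] m_def[symmetric] e_def[symmetric]
    using descent excess by (auto simp: pos_le_divide_eq algebra_simps)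
qed

end
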